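(* The halved Farey graph $\check F$ contains the Farey graph as a minor with finite branch sets.
   Context: Graphs are simple and may be infinite. The halved Farey graph of order $0$, $\check F_0$, is a $K^2$ whose single edge is coloured blue. Inductively, $\check F_{n+1}$ is the edge-coloured graph obtained from $\check F_n$ by adding, for every blue edge $e$ of $\check F_n$, a new vertex $v_e$ joined precisely to the two endvertices of $e$ by two blue edges, and recolouring all edges of $\check F_n\subseteq \check F_{n+1}$ black. The halved Farey graph is $\check F:=\bigcup_{n\in\mathbb{N}}\check F_n$ (forgetting colours). The Farey graph is the graph with vertex set $\mathbb{Q}\cup\{\infty\}$ in which two rationals $a/b$ and $c/d$ written in lowest terms (allowing $\infty=(\pm1)/0$) are adjacent if and only if $ad-bc=\pm1$; equivalently (up to isomorphism) it is the union $G_1\cup G_2$ of two copies $G_1,G_2$ of $\check F$ with $G_1\cap G_2=\check F_0$. A graph $H$ is a minor of $G$ if there are pairwise disjoint non-empty vertex sets $V_h\subseteq V(G)$ ($h\in V(H)$), each inducing a connected subgraph of $G$ (the branch sets), such that for every edge $hh'$ of $H$ there is an edge of $G$ between $V_h$ and $V_{h'}$. *)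

theory Defs
  imports Main "HOL.Rat"
begin

text \<open>A graph is given by a vertex set V and a symmetric adjacency relation E.\<close>

definition induces_connected :: "('a \<Rightarrow> 'a \<Rightarrow> bool) \<Rightarrow> 'a set \<Rightarrow> bool" where
  "induces_connected E S \<longleftrightarrow>
     (\<forall>x\<in>S. \<forall>y\<in>S. (\<lambda>a b. E a b \<and> a \<in> S \<and> b \<in> S)\<^sup>*\<^sup>* x y)"

definition minor_with_finite_branch_sets ::
  "'h set \<Rightarrow> ('h \<Rightarrow> 'h \<Rightarrow> bool) \<Rightarrow> 'g set \<Rightarrow> ('g \<Rightarrow> 'g \<Rightarrow> bool) \<Rightarrow> bool" where
  "minor_with_finite_branch_sets VH EH VG EG \<longleftrightarrow>
     (\<exists>B :: 'h \<Rightarrow> 'g set.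
        (\<forall>h\<in>VH. B h \<noteq> {} \<and> B h \<subseteq> VG \<and> finite (B h) \<and> induces_connected EG (B h)) \<and>
        (\<forall>h\<in>VH. \<forall>h'\<in>VH. h \<noteq> h' \<longrightarrow> B h \<inter> B h' = {}) \<and>
        (\<forall>h\<in>VH. \<forall>h'\<in>VH. EH h h' \<longrightarrow> (\<exists>x\<in>B h. \<exists>y\<in>B h'. EG x y)))"

text \<open>Vertices: the two vertices L, R of the initial K^2, and a vertex V e for every
  blue edge e ever created. Blue edges are named by bool lists: the initial blue edge is [],
  and the blue edge e (with new vertex V e) gives rise to the two blue edges
  False # e (joining the first endpoint of e to V e) and True # e (joining V e to the
  second endpoint of e). The blue edges of stage n are those named by lists of length n.\<close>

datatype hvert = L | R | V "bool list"

fun ends :: "bool list \<Rightarrow> hvert \<times> hvert" where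
  "ends [] = (L, R)"
| "ends (False # e) = (fst (ends e), V e)"
| "ends (True # e) = (V e, snd (ends e))"

definition halved_V_stage :: "nat \<Rightarrow> hvert set" where
  "halved_V_stage n = {L, R} \<union> {V e | e. length e < n}"

definition halved_E_stage :: "nat \<Rightarrow> hvert \<Rightarrow> hvert \<Rightarrow> bool" where
  "halved_E_stage n x y \<longleftrightarrow> (\<exists>e. length e \<le> n \<and> (ends e = (x, y) \<or> ends e = (y, x)))"

definition halved_V :: "hvert set" where
  "halved_V = (\<Union>n. halved_V_stage n)"

definition halved_E :: "hvert \<Rightarrow> hvert \<Rightarrow> bool" where
  "halved_E x y \<longleftrightarrow> (\<exists>n. halved_E_stage n x y)"

text \<open>Vertices: rat option, None = \<infinity> = 1/0. Lowest-terms representation.\<close>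
definition frac :: "rat option \<Rightarrow> int \<times> int" where
  "frac x = (case x of None \<Rightarrow> (1, 0) | Some q \<Rightarrow> quotient_of q)"

definition farey_E :: "rat option \<Rightarrow> rat option \<Rightarrow> bool" where
  "farey_E x y \<longleftrightarrow>
     (let (a, b) = frac x; (c, d) = frac y in a * d - b * c = 1 \<or> a * d - b * c = -1)"

end

theory Submission
  imports Defs
begin

(* Label L, R by 0/1, 1/0 and every new vertex V e by the mediant of the labels of the ends
   of e (the Stern-Brocot tree). The ends of the blue edges then carry exactly the pairs of
   Farey neighbours a/b < c/d in [0, \<infinity>], each pair exactly once, so the labelling is
   injective and Farey-adjacent labels are adjacent: the halved Farey graph is the Farey graph
   on [0, \<infinity>]. The whole Farey graph is a minor of it: \<infinity> becomes the edge {0, \<infinity>} = {L, R},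
   and a rational r the single vertex labelled r + 1 if r \<ge> 0 and 1/(1 - r) if r < 0. *)

fun mediant :: "int \<times> int \<Rightarrow> int \<times> int \<Rightarrow> int \<times> int" where
  "mediant (a, b) (c, d) = (a + c, b + d)"

(* (a, b) stands for the fraction a/b, with (1, 0) = \<infinity>: farey_pair x y says that
   0 \<le> x < y \<le> \<infinity> are Farey neighbours. *)
fun farey_pair :: "int \<times> int \<Rightarrow> int \<times> int \<Rightarrow> bool" where
  "farey_pair (a, b) (c, d) \<longleftrightarrow> 0 \<le> a \<and> 0 \<le> b \<and> 0 \<le> c \<and> 0 \<le> d \<and> c * b - a * d = 1"

fun end_labels :: "bool list \<Rightarrow> (int \<times> int) \<times> (int \<times> int)" where
  "end_labels [] = ((0, 1), (1, 0))"
| "end_labels (False # e) = (case end_labels e of (x, y) \<Rightarrow> (x, mediant x y))"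
| "end_labels (True # e) = (case end_labels e of (x, y) \<Rightarrow> (mediant x y, y))"

fun label :: "hvert \<Rightarrow> int \<times> int" where
  "label L = (0, 1)"
| "label R = (1, 0)"
| "label (V e) = case_prod mediant (end_labels e)"

lemma label_ends: "map_prod label label (ends e) = end_labels e"
proof (induction e)
  case (Cons s e)
  then show ?case
    by (cases s) (auto simp: map_prod_def split: prod.splits)
qed simp

lemma farey_pair_mediant:
  assumes "farey_pair x y"
  shows "farey_pair x (mediant x y)" "farey_pair (mediant x y) y"
  using assms by (cases x; cases y; simp add: algebra_simps)+

lemma farey_pair_end_labels: "case_prod farey_pair (end_labels e)"
proof (induction e)
  case (Cons s e)
  obtain x y where "end_labels e = (x, y)" by (cases "end_labels e")
  with Cons.IH farey_pair_mediant[of x y] show ?case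
    by (cases s) simp_all
qed simp

lemma farey_pair_incomparable:
  fixes a b c d :: int
  assumes "farey_pair (a, b) (c, d)" "\<not> (a \<le> c \<and> b \<le> d)" "\<not> (c \<le> a \<and> d \<le> b)"
  shows "(a, b) = (0, 1) \<and> (c, d) = (1, 0)"
proof -
  have nonneg: "0 \<le> a" "0 \<le> b" "0 \<le> c" "0 \<le> d" and det: "c * b - a * d = 1"
    using assms(1) by simp_all
  consider "c < a" "b < d" | "a < c" "d < b"
    using assms(2,3) by linarith
  then show ?thesis
  proof cases
    case 1
    have "c * b \<le> a * d"
      using 1 nonneg mult_mono[of c a b d] by simp
    with det show ?thesis by linarith
  next
    case 2
    have "c * (d + 1) \<le> c * b" "a * d \<le> c * d"
      using 2 nonneg by (simp_all add: mult_left_mono mult_right_mono)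
    with det have "c \<le> 1" by (simp add: algebra_simps)
    with 2 nonneg have "c = 1" "a = 0" by auto
    with 2 det nonneg show ?thesis by simp
  qed
qed

lemma end_labels_surj: "farey_pair x y \<Longrightarrow> \<exists>e. end_labels e = (x, y)"
proof (induction "nat (fst x + snd x + fst y + snd y)" arbitrary: x y rule: less_induct)
  case less
  \<comment> \<open>undo the last mediant step by subtracting the smaller end label from the larger\<close>
  obtain a b c d where xy: "x = (a, b)" "y = (c, d)" by fastforce
  have nonneg: "0 \<le> a" "0 \<le> b" "0 \<le> c" "0 \<le> d" and det: "c * b - a * d = 1"
    using less.prems xy by simp_all
  consider "a \<le> c" "b \<le> d" | "c \<le> a" "d \<le> b" | "(a, b) = (0, 1)" "(c, d) = (1, 0)"
    using farey_pair_incomparable less.prems xy by blast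
  then show ?case
  proof cases
    case 1
    have "0 < a + b" using det nonneg by (cases "a + b = 0") (auto simp: add_nonneg_eq_0_iff)
    then obtain e where "end_labels e = ((a, b), (c - a, d - b))"
      using less.hyps[of "(a, b)" "(c - a, d - b)"] 1 nonneg det xy
      by (auto simp: algebra_simps)
    then have "end_labels (False # e) = (x, y)" using xy by simp
    then show ?thesis ..
  next
    case 2
    have "0 < c + d" using det nonneg by (cases "c + d = 0") (auto simp: add_nonneg_eq_0_iff)
    then obtain e where "end_labels e = ((a - c, b - d), (c, d))"
      using less.hyps[of "(a - c, b - d)" "(c, d)"] 2 nonneg det xy
      by (auto simp: algebra_simps)
    then have "end_labels (True # e) = (x, y)" using xy by simp
    then show ?thesis ..
  next
    case 3
    then have "end_labels [] = (x, y)" using xy by simp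
    then show ?thesis ..
  qed
qed

lemma end_labels_Cons_dominates:
  assumes "end_labels (s # e) = ((a, b), (c, d))"
  shows "if s then c \<le> a \<and> d \<le> b else a \<le> c \<and> b \<le> d"
proof -
  obtain x y where xy: "end_labels e = (x, y)" by (cases "end_labels e")
  with farey_pair_end_labels[of e] have "farey_pair x y" by simp
  with assms xy show ?thesis
    by (cases s; cases x; cases y) auto
qed

lemma end_labels_Cons_neq_Nil: "end_labels (s # e) \<noteq> end_labels []"
  using end_labels_Cons_dominates[of s e 0 1 1 0] by (auto split: if_splits)

lemma inj_end_labels: "inj end_labels"
proof
  fix e e' :: "bool list"
  show "end_labels e = end_labels e' \<Longrightarrow> e = e'"
  proof (induction e arbitrary: e')
    case Nil
    then show ?case
      using end_labels_Cons_neq_Nil by (cases e') metis+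
  next
    case (Cons s e)
    obtain t f where e': "e' = t # f"
      using Cons.prems end_labels_Cons_neq_Nil by (cases e') metis+
    obtain a b c d where abcd: "end_labels (s # e) = ((a, b), (c, d))"
      by (metis prod.exhaust)
    have "farey_pair (a, b) (c, d)"
      using farey_pair_end_labels[of "s # e"] abcd by simp
    then have "s = t"
      using end_labels_Cons_dominates[OF abcd] end_labels_Cons_dominates[of t f a b c d]
        Cons.prems abcd e' by (auto split: if_splits)
    then have "end_labels e = end_labels f"
      using Cons.prems e' by (cases s) (auto split: prod.splits)
    with Cons.IH e' \<open>s = t\<close> show ?case by simp
  qed
qed

lemma farey_pair_pos:
  assumes "farey_pair (a, b) (c, d)"
  shows "0 < b \<and> 0 < c"
proof -
  have "0 \<le> a * d" "c * b - a * d = 1"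
    using assms by simp_all
  then have "0 < c * b" by linarith
  with assms show ?thesis by (auto simp: zero_less_mult_iff)
qed

lemma farey_pair_mediant_unique:
  assumes "farey_pair x y" "farey_pair x' y'" "mediant x y = mediant x' y'"
  shows "x = x' \<and> y = y'"
proof -
  obtain a b c d a' b' c' d' where xy: "x = (a, b)" "y = (c, d)" "x' = (a', b')" "y' = (c', d')"
    by (metis prod.exhaust)
  define p q where "p = a + c" and "q = b + d"
  have sums: "a' + c' = p" "b' + d' = q"
    using assms(3) xy by (simp_all add: p_def q_def)
  have nonneg: "0 \<le> a" "0 \<le> a'" "0 \<le> d" "0 \<le> d'"
    using assms(1,2) xy by simp_all
  have det: "p * b - a * q = 1" "p * b' - a' * q = 1"
    using assms(1,2) xy by (simp add: p_def q_def algebra_simps, simp add: algebra_simps flip: sums)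
  have "b - b' = b * (p * b' - a' * q) - b' * (p * b - a * q)"
    using det by simp
  also have "\<dots> = q * (a * b' - a' * b)"
    by (simp add: algebra_simps)
  finally have diff: "b - b' = q * (a * b' - a' * b)" .
  \<comment> \<open>so b and b' are congruent modulo q, while 0 < b, b' \<le> q\<close>
  have "0 < b" "0 < b'"
    using assms(1,2) farey_pair_pos xy by blast+
  moreover have "b \<le> q" "b' \<le> q"
    using nonneg sums by (auto simp: q_def)
  ultimately have "\<bar>b - b'\<bar> < q"
    by (simp add: abs_less_iff)
  then have "q * \<bar>a * b' - a' * b\<bar> < q * 1"
    using \<open>0 < b\<close> \<open>b \<le> q\<close> by (simp add: diff abs_mult)
  then have "a * b' - a' * b = 0"
    using mult_less_cancel_left_pos[of q] \<open>0 < b\<close> \<open>b \<le> q\<close> by simp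
  with diff have "b = b'" by simp
  with det have "a * q = a' * q" by (simp only:)
  with \<open>0 < b\<close> \<open>b \<le> q\<close> have "a = a'" by simp
  with \<open>b = b'\<close> sums xy show ?thesis by (simp add: p_def q_def)
qed

lemma label_V_pos: "label (V e) = (p, q) \<Longrightarrow> 0 < p \<and> 0 < q"
proof -
  assume V: "label (V e) = (p, q)"
  obtain a b c d where abcd: "end_labels e = ((a, b), (c, d))"
    by (metis prod.exhaust)
  with farey_pair_end_labels[of e] have "farey_pair (a, b) (c, d)" by simp
  with farey_pair_pos[of a b c d] abcd V show ?thesis by auto
qed

lemma inj_label: "inj label"
proof (rule injI)
  fix u v assume uv: "label u = label v"
  have "e = e'" if "label (V e) = label (V e')" for e e'
  proof -
    obtain x y x' y' where "end_labels e = (x, y)" "end_labels e' = (x', y')"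
      by (metis prod.exhaust)
    moreover from this have "farey_pair x y" "farey_pair x' y'"
      using farey_pair_end_labels[of e] farey_pair_end_labels[of e'] by simp_all
    ultimately have "end_labels e = end_labels e'"
      using that farey_pair_mediant_unique by simp
    then show ?thesis
      using inj_end_labels by (simp add: inj_eq)
  qed
  moreover have "label (V e) \<noteq> label L" "label (V e) \<noteq> label R" for e
    using label_V_pos[of e] by auto
  ultimately show "u = v"
    using uv by (cases u; cases v) (simp_all, metis+)
qed

lemma halved_E_iff: "halved_E u v \<longleftrightarrow> (\<exists>e. ends e = (u, v) \<or> ends e = (v, u))"
  unfolding halved_E_def halved_E_stage_def by blast

lemma halved_E_if_farey_pair:
  assumes "farey_pair (label u) (label v) \<or> farey_pair (label v) (label u)"
  shows "halved_E u v"
proof -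
  have "\<exists>e. ends e = (x, y)" if xy: "farey_pair (label x) (label y)" for x y
  proof -
    obtain e where "end_labels e = (label x, label y)"
      using end_labels_surj[OF xy] by blast
    moreover obtain x' y' where "ends e = (x', y')"
      by (cases "ends e")
    ultimately have "label x' = label x" "label y' = label y"
      using label_ends[of e] by simp_all
    with \<open>ends e = (x', y')\<close> have "ends e = (x, y)"
      using inj_label by (simp add: inj_eq)
    then show ?thesis ..
  qed
  with assms show ?thesis
    unfolding halved_E_iff by blast
qed

lemma coprime_farey_partner:
  fixes p q :: int
  assumes "0 < p" "0 < q" "coprime p q"
  shows "\<exists>y. farey_pair (p, q) y"
proof -
  obtain u v where "u * p + v * q = 1"
    using bezout_int[of p q] assms(3) by (auto simp: coprime_iff_gcd_eq_1)
  define k where "k = \<bar>u\<bar> + \<bar>v\<bar>"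
  have "0 \<le> k" by (simp add: k_def)
  then have "k \<le> k * p" "k \<le> k * q"
    using assms mult_left_mono[of 1 p k] mult_left_mono[of 1 q k] by simp_all
  then have "0 \<le> v + k * p" "0 \<le> k * q - u"
    using k_def abs_ge_self[of u] abs_ge_minus_self[of v] by linarith+
  moreover have "(v + k * p) * q - p * (k * q - u) = 1"
    using \<open>u * p + v * q = 1\<close> by (simp add: algebra_simps)
  ultimately have "farey_pair (p, q) (v + k * p, k * q - u)"
    using assms by simp
  then show ?thesis ..
qed

lemma label_surj:
  fixes p q :: int
  assumes "0 < p" "0 < q" "coprime p q"
  shows "\<exists>v. label v = (p, q)"
proof -
  obtain y where "farey_pair (p, q) y"
    using coprime_farey_partner assms by blast
  then obtain e where "end_labels e = ((p, q), y)"
    using end_labels_surj by blast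
  then have "label (fst (ends e)) = (p, q)"
    using label_ends[of e] by (simp add: map_prod_def split: prod.splits)
  then show ?thesis ..
qed

(* On fractions: r \<mapsto> r + 1 for r \<ge> 0 and r \<mapsto> 1/(1 - r) for r < 0. Both are Moebius maps
   in SL2(Z), hence preserve Farey adjacency, and together they map Q bijectively onto the
   positive rationals. *)
fun pos_pair :: "int \<times> int \<Rightarrow> int \<times> int" where
  "pos_pair (a, b) = (if 0 \<le> a then (a + b, b) else (b, b - a))"

lemma pos_pair_reduced:
  assumes "pos_pair (a, b) = (p, q)" "0 < b" "coprime a b"
  shows "0 < p \<and> 0 < q \<and> coprime p q"
proof (cases "0 \<le> a")
  case True
  with assms show ?thesis
    by (auto simp: coprime_iff_gcd_eq_1)
next
  case False
  have "gcd b (b - a) = gcd a b"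
    by (metis gcd_diff2 gcd.commute)
  with False assms show ?thesis
    by (auto simp: coprime_iff_gcd_eq_1)
qed

lemma pos_pair_inj:
  assumes "pos_pair (a, b) = pos_pair (c, d)" "0 < b" "0 < d"
  shows "(a, b) = (c, d)"
  using assms by (auto split: if_splits)

lemma farey_pair_pos_pair:
  fixes a b c d :: int
  assumes "0 < b" "0 < d" "a * d - b * c = 1 \<or> a * d - b * c = -1"
  shows "farey_pair (pos_pair (a, b)) (pos_pair (c, d)) \<or> farey_pair (pos_pair (c, d)) (pos_pair (a, b))"
proof -
  consider "0 \<le> a" "0 \<le> c" | "a < 0" "c < 0" | "0 \<le> a" "c < 0" | "a < 0" "0 \<le> c"
    by linarith
  then show ?thesis
  proof cases
    case 1
    with assms show ?thesis by (auto simp: algebra_simps)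
  next
    case 2
    with assms show ?thesis by (auto simp: algebra_simps)
  next
    case 3
    \<comment> \<open>the only Farey edges from nonnegative to negative rationals join 0 to some -1/d\<close>
    have "b * c \<le> - b" "0 \<le> a * d"
      using 3 assms mult_left_mono[of c "-1" b] by simp_all
    with assms have "a * d = 0" "b * c = -1" by linarith+
    with 3 assms show ?thesis by (auto simp: algebra_simps)
  next
    case 4
    have "a * d \<le> - d" "0 \<le> b * c"
      using 4 assms mult_right_mono[of a "-1" d] by simp_all
    with assms have "b * c = 0" "a * d = -1" by linarith+
    with 4 assms show ?thesis by (auto simp: algebra_simps)
  qed
qed

lemma farey_pair_pos_pair_integer:
  "farey_pair (pos_pair (c, 1)) (1, 0) \<or> farey_pair (0, 1) (pos_pair (c, 1))"
  by simp

lemma induces_connected_singleton: "induces_connected E {x}"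
  by (simp add: induces_connected_def)

lemma induces_connected_edge: "E x y \<Longrightarrow> E y x \<Longrightarrow> induces_connected E {x, y}"
  unfolding induces_connected_def by blast

lemma halved_V_UNIV: "halved_V = UNIV"
proof -
  have "v \<in> halved_V_stage (Suc (length e))" if "v = V e" for v e
    using that by (auto simp: halved_V_stage_def)
  then have "V e \<in> halved_V" for e
    by (auto simp: halved_V_def)
  then show ?thesis
    by (auto simp: halved_V_def halved_V_stage_def intro: hvert.exhaust)
qed

definition rat_vertex :: "rat \<Rightarrow> hvert" where
  "rat_vertex r = inv label (pos_pair (quotient_of r))"

lemma label_rat_vertex: "label (rat_vertex r) = pos_pair (quotient_of r)"
proof -
  obtain a b where ab: "quotient_of r = (a, b)" by fastforce
  then obtain p q where pq: "pos_pair (a, b) = (p, q)" "0 < p" "0 < q" "coprime p q"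
    using pos_pair_reduced quotient_of_denom_pos quotient_of_coprime by (metis prod.exhaust)
  then have "(p, q) \<in> range label"
    using label_surj by (metis rangeI)
  with ab pq show ?thesis
    by (simp add: rat_vertex_def f_inv_into_f)
qed

lemma rat_vertex_inj: "rat_vertex r = rat_vertex s \<Longrightarrow> r = s"
  using label_rat_vertex pos_pair_inj quotient_of_denom_pos quotient_of_inject_eq
  by (metis prod.exhaust)

lemma rat_vertex_neq_LR: "rat_vertex r \<noteq> L" "rat_vertex r \<noteq> R"
  using label_rat_vertex[of r] pos_pair_reduced quotient_of_denom_pos quotient_of_coprime
  by (metis label.simps(1,2) prod.exhaust less_irrefl)+

definition branch_set :: "rat option \<Rightarrow> hvert set" where
  "branch_set x = (case x of None \<Rightarrow> {L, R} | Some r \<Rightarrow> {rat_vertex r})"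

lemma branch_set_disjoint: "x \<noteq> y \<Longrightarrow> branch_set x \<inter> branch_set y = {}"
  using rat_vertex_inj rat_vertex_neq_LR
  by (cases x; cases y) (auto simp: branch_set_def)

lemma farey_E_branch_set:
  assumes "farey_E x y"
  shows "\<exists>u\<in>branch_set x. \<exists>v\<in>branch_set y. halved_E u v"
proof -
  have "\<exists>u\<in>branch_set x. \<exists>v\<in>branch_set y.
          farey_pair (label u) (label v) \<or> farey_pair (label v) (label u)"
  proof (cases x; cases y)
    fix r s assume xy: "x = Some r" "y = Some s"
    obtain a b c d where q: "quotient_of r = (a, b)" "quotient_of s = (c, d)"
      by (metis prod.exhaust)
    have "a * d - b * c = 1 \<or> a * d - b * c = -1"
      using assms xy q by (simp add: farey_E_def frac_def)
    then show ?thesis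
      using farey_pair_pos_pair quotient_of_denom_pos q xy
      by (simp add: branch_set_def label_rat_vertex)
  next
    fix s assume xy: "x = None" "y = Some s"
    obtain c d where q: "quotient_of s = (c, d)"
      by (metis prod.exhaust)
    have "d = 1"
      using assms xy q quotient_of_denom_pos[OF q] by (auto simp: farey_E_def frac_def)
    then show ?thesis
      using farey_pair_pos_pair_integer[of c] q xy by (auto simp: branch_set_def label_rat_vertex)
  next
    fix r assume xy: "x = Some r" "y = None"
    obtain a b where q: "quotient_of r = (a, b)"
      by (metis prod.exhaust)
    have "b = 1"
      using assms xy q quotient_of_denom_pos[OF q] by (auto simp: farey_E_def frac_def)
    then show ?thesis
      using farey_pair_pos_pair_integer[of a] q xy by (auto simp: branch_set_def label_rat_vertex)
  qed (use assms in \<open>simp add: farey_E_def frac_def\<close>)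
  then show ?thesis
    using halved_E_if_farey_pair by blast
qed

theorem lemma2p1:
  shows "minor_with_finite_branch_sets (UNIV :: rat option set) farey_E halved_V halved_E"
  unfolding minor_with_finite_branch_sets_def
proof (intro exI[of _ branch_set] conjI ballI impI)
  fix x y :: "rat option"
  show "branch_set x \<noteq> {}" "branch_set x \<subseteq> halved_V" "finite (branch_set x)"
    by (auto simp: branch_set_def halved_V_UNIV split: option.splits)
  have "halved_E L R" "halved_E R L"
    by (rule halved_E_if_farey_pair, simp)+
  then show "induces_connected halved_E (branch_set x)"
    using induces_connected_edge induces_connected_singleton
    by (auto simp: branch_set_def split: option.splits)
  show "x \<noteq> y \<Longrightarrow> branch_set x \<inter> branch_set y = {}"
    by (rule branch_set_disjoint)
  show "farey_E x y \<Longrightarrow> \<exists>u\<in>branch_set x. \<exists>v\<in>branch_set y. halved_E u v"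
    by (rule farey_E_branch_set)
qed

end
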